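(* Let $R$ be a unital semiprime left Goldie ring, $X$ a nonempty set, and for each $x\in X$ let $\sigma_x$ be a ring automorphism of $R$ and $\delta_x$ a $\sigma_x$-derivation of $R$; let $S=R[X;\mathscr{G},\mathscr{D}]$ be the free skew extension with $\mathscr{G}=\{\sigma_x\}$, $\mathscr{D}=\{\delta_x\}$. Fix a linear order on $X$ and extend it to $\langle X\rangle$ as described in the context. Let $A$ be a nonzero ideal of $S$ and let $I$ be the additive subgroup of $R$ generated by the leading coefficients of the nonzero elements of $A$. Then (1) $I$ is a two-sided ideal of $R$; (2) $\sigma_x(I)\subseteq I$ for every $x\in X$; (3) if $M=\mathrm{ann}_R(I)$, then $\sigma_x(M)=M$ and $\delta_x(M)\subseteq M$ for every $x\in X$.
   Context: A $\sigma$-derivation is an additive map $\delta\colon R\to R$ with $\delta(ab)=\delta(a)b+\sigma(a)\delta(b)$. Let $\langle X\rangle$ be the free monoid on $X$. A free skew extension $S=R[X;\mathscr{G},\mathscr{D}]$ is a ring containing $R$ as a subring and $X$ as a subset, which is a free left $R$-module with basis $\langle X\rangle$, and in which $xr=\sigma_x(r)x+\delta_x(r)$ for all $x\in X$, $r\in R$. Given a linear order $\prec$ on $X$, extend it to $\langle X\rangle$ by: $x_{i_1}\cdots x_{i_k}\prec x_{j_1}\cdots x_{j_l}$ iff $k<l$, or $k=l$ and at the first position $s$ where $i_s\ne j_s$ one has $x_{i_s}\prec x_{j_s}$. Each nonzero $f=\sum_\Delta r_\Delta\Delta\in S$ ($r_\Delta\in R$, almost all zero) has leading term the largest $\Delta$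 with $r_\Delta\neq0$, and its coefficient is the leading coefficient of $f$. $\mathrm{ann}_R(I)=\{r\in R\mid rI=Ir=0\}$. A ring is left Goldie if it has no infinite direct sum of nonzero left ideals and has ACC on left annihilators. *)

theory Defs
  imports Main
begin

definition add_subgroup :: "'a::ring_1 set \<Rightarrow> bool" where
  "add_subgroup G \<longleftrightarrow> 0 \<in> G \<and> (\<forall>a\<in>G. \<forall>b\<in>G. a + b \<in> G) \<and> (\<forall>a\<in>G. - a \<in> G)"

definition left_ideal :: "'a::ring_1 set \<Rightarrow> bool" where
  "left_ideal L \<longleftrightarrow> add_subgroup L \<and> (\<forall>r a. a \<in> L \<longrightarrow> r * a \<in> L)"

definition two_sided_ideal :: "'a::ring_1 set \<Rightarrow> bool" where
  "two_sided_ideal J \<longleftrightarrow> add_subgroup J \<and> (\<forall>r a. a \<in> J \<longrightarrow> r * a \<in> J \<and> a * r \<in> J)"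

definition add_span :: "'a::ring_1 set \<Rightarrow> 'a set" where
  "add_span T = \<Inter> {G. add_subgroup G \<and> T \<subseteq> G}"

definition set_prod :: "'a::ring_1 set \<Rightarrow> 'a set \<Rightarrow> 'a set" where
  "set_prod A B = add_span {a * b | a b. a \<in> A \<and> b \<in> B}"

definition semiprime :: "'a::ring_1 itself \<Rightarrow> bool" where
  "semiprime _ \<longleftrightarrow> (\<forall>J::'a set. \<forall>n::nat. two_sided_ideal J \<and> n \<ge> 1 \<and>
      (((set_prod J) ^^ (n - 1)) J) = {0} \<longrightarrow> J = {0})"

definition left_ann :: "'a::ring_1 set \<Rightarrow> 'a set" where
  "left_ann T = {r. \<forall>t\<in>T. r * t = 0}"

definition left_Goldie :: "'a::ring_1 itself \<Rightarrow> bool" where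
  "left_Goldie _ \<longleftrightarrow>
     \<comment> \<open>no infinite direct sum of nonzero left ideals\<close>
     \<not> (\<exists>L :: nat \<Rightarrow> 'a set. (\<forall>n. left_ideal (L n) \<and> L n \<noteq> {0}) \<and>
          (\<forall>n a. (\<forall>i<n. a i \<in> L i) \<and> (\<Sum>i<n. a i) = 0 \<longrightarrow> (\<forall>i<n. a i = 0)))
   \<and> \<comment> \<open>ACC on left annihilators\<close>
     (\<forall>C :: nat \<Rightarrow> 'a set. (\<forall>n. \<exists>T. C n = left_ann T) \<and> (\<forall>n. C n \<subseteq> C (Suc n))
          \<longrightarrow> (\<exists>N. \<forall>m\<ge>N. C m = C N))"

definition ann :: "'a::ring_1 set \<Rightarrow> 'a set" where
  "ann I = {r. \<forall>i\<in>I. r * i = 0 \<and> i * r = 0}"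

definition ring_aut :: "('a::ring_1 \<Rightarrow> 'a) \<Rightarrow> bool" where
  "ring_aut \<sigma> \<longleftrightarrow> bij \<sigma> \<and> (\<forall>a b. \<sigma> (a + b) = \<sigma> a + \<sigma> b) \<and>
     (\<forall>a b. \<sigma> (a * b) = \<sigma> a * \<sigma> b) \<and> \<sigma> 1 = 1"

definition sigma_derivation :: "('a::ring_1 \<Rightarrow> 'a) \<Rightarrow> ('a \<Rightarrow> 'a) \<Rightarrow> bool" where
  "sigma_derivation \<sigma> \<delta> \<longleftrightarrow> (\<forall>a b. \<delta> (a + b) = \<delta> a + \<delta> b) \<and>
     (\<forall>a b. \<delta> (a * b) = \<delta> a * b + \<sigma> a * \<delta> b)"

definition ring_hom_class :: "('a::ring_1 \<Rightarrow> 'b::ring_1) \<Rightarrow> bool" where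
  "ring_hom_class f \<longleftrightarrow> (\<forall>a b. f (a + b) = f a + f b) \<and> (\<forall>a b. f (a * b) = f a * f b) \<and> f 1 = 1"

text \<open>The ring S is the type 's; R embeds via the injective ring homomorphism iota;
  X embeds via the injective map xi. Words of the free monoid are lists over X.\<close>

definition mon :: "('x \<Rightarrow> 's::ring_1) \<Rightarrow> 'x list \<Rightarrow> 's" where
  "mon \<xi> w = prod_list (map \<xi> w)"

definition represents :: "('r::ring_1 \<Rightarrow> 's::ring_1) \<Rightarrow> ('x \<Rightarrow> 's) \<Rightarrow> 'x set
    \<Rightarrow> ('x list \<Rightarrow> 'r) \<Rightarrow> 's \<Rightarrow> bool" where
  "represents \<iota> \<xi> X c s \<longleftrightarrow> finite {w. c w \<noteq> 0} \<and> {w. c w \<noteq> 0} \<subseteq> lists X \<and>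
     s = (\<Sum>w\<in>{w. c w \<noteq> 0}. \<iota> (c w) * mon \<xi> w)"

definition free_skew_ext :: "('r::ring_1 \<Rightarrow> 's::ring_1) \<Rightarrow> ('x \<Rightarrow> 's) \<Rightarrow> 'x set
    \<Rightarrow> ('x \<Rightarrow> 'r \<Rightarrow> 'r) \<Rightarrow> ('x \<Rightarrow> 'r \<Rightarrow> 'r) \<Rightarrow> bool" where
  "free_skew_ext \<iota> \<xi> X \<sigma> \<delta> \<longleftrightarrow>
     ring_hom_class \<iota> \<and> inj \<iota> \<and> inj_on \<xi> X \<and>
     (\<forall>s. \<exists>!c. represents \<iota> \<xi> X c s) \<and>
     (\<forall>x\<in>X. \<forall>r. \<xi> x * \<iota> r = \<iota> (\<sigma> x r) * \<xi> x + \<iota> (\<delta> x r))"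

definition coeffs :: "('r::ring_1 \<Rightarrow> 's::ring_1) \<Rightarrow> ('x \<Rightarrow> 's) \<Rightarrow> 'x set \<Rightarrow> 's \<Rightarrow> 'x list \<Rightarrow> 'r" where
  "coeffs \<iota> \<xi> X s = (THE c. represents \<iota> \<xi> X c s)"

definition strict_lin_order :: "'x set \<Rightarrow> ('x \<Rightarrow> 'x \<Rightarrow> bool) \<Rightarrow> bool" where
  "strict_lin_order X lt \<longleftrightarrow> (\<forall>a\<in>X. \<not> lt a a) \<and>
     (\<forall>a\<in>X. \<forall>b\<in>X. \<forall>c\<in>X. lt a b \<and> lt b c \<longrightarrow> lt a c) \<and>
     (\<forall>a\<in>X. \<forall>b\<in>X. a \<noteq> b \<longrightarrow> lt a b \<or> lt b a)"

definition deglex :: "('x \<Rightarrow> 'x \<Rightarrow> bool) \<Rightarrow> 'x list \<Rightarrow> 'x list \<Rightarrow> bool" where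
  "deglex lt u v \<longleftrightarrow> length u < length v \<or>
     (length u = length v \<and> (\<exists>k < length u. take k u = take k v \<and> lt (u ! k) (v ! k)))"

definition lead_term :: "('r::ring_1 \<Rightarrow> 's::ring_1) \<Rightarrow> ('x \<Rightarrow> 's) \<Rightarrow> 'x set
    \<Rightarrow> ('x \<Rightarrow> 'x \<Rightarrow> bool) \<Rightarrow> 's \<Rightarrow> 'x list" where
  "lead_term \<iota> \<xi> X lt s = (THE w. coeffs \<iota> \<xi> X s w \<noteq> 0 \<and>
      (\<forall>v. coeffs \<iota> \<xi> X s v \<noteq> 0 \<and> v \<noteq> w \<longrightarrow> deglex lt v w))"

definition lead_coeff_S :: "('r::ring_1 \<Rightarrow> 's::ring_1) \<Rightarrow> ('x \<Rightarrow> 's) \<Rightarrow> 'x set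
    \<Rightarrow> ('x \<Rightarrow> 'x \<Rightarrow> bool) \<Rightarrow> 's \<Rightarrow> 'r" where
  "lead_coeff_S \<iota> \<xi> X lt s = coeffs \<iota> \<xi> X s (lead_term \<iota> \<xi> X lt s)"

end

theory Submission
  imports Defs
begin

text \<open>
  Leading coefficients transform simply under the operations that preserve \<open>A\<close>: for a nonzero
  \<open>a \<in> A\<close> with leading word \<open>w\<close> and leading coefficient \<open>t\<close>, the element \<open>r a\<close> has
  coefficient \<open>r t\<close> at \<open>w\<close>, the element \<open>x a\<close> has leading word \<open>x w\<close> with coefficient
  \<open>\<sigma>\<^sub>x t\<close>, and \<open>a r'\<close> has coefficient \<open>t \<sigma>\<^sub>w(r')\<close> at \<open>w\<close>, all other words being
  smaller. Since \<open>\<sigma>\<^sub>w\<close> is surjective, \<open>I\<close> is a \<open>\<sigma>\<close>-stable ideal.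

  For \<open>M = ann I\<close>, semiprimeness makes \<open>M\<close> the left annihilator of \<open>I\<close> and gives
  \<open>I \<inter> M = 0\<close>; as the leading coefficient of \<open>m a\<close> would lie in \<open>I \<inter> M\<close>, we get \<open>M A = 0\<close>.
  The ascending chain of left annihilators of \<open>\<sigma>\<^sub>x\<^sup>n(I)\<close> stabilises, which yields
  \<open>\<sigma>\<^sub>x(M) = M\<close>. Finally \<open>0 = x (m a) = \<sigma>\<^sub>x(m) (x a) + \<delta>\<^sub>x(m) a\<close> shows that
  \<open>\<delta>\<^sub>x(m)\<close> kills \<open>A\<close>, hence all coefficients of \<open>A\<close> and so \<open>I\<close>.
\<close>

lemma add_subgroup_add_span: "add_subgroup (add_span T)"
  unfolding add_span_def add_subgroup_def by auto

lemma subset_add_span: "T \<subseteq> add_span T"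
  unfolding add_span_def by auto

lemma add_span_least: "add_subgroup G \<Longrightarrow> T \<subseteq> G \<Longrightarrow> add_span T \<subseteq> G"
  unfolding add_span_def by auto

lemma zero_in_add_span: "0 \<in> add_span T"
  using add_subgroup_add_span unfolding add_subgroup_def by blast

lemma add_subgroup_singleton_zero: "add_subgroup {0}"
  unfolding add_subgroup_def by simp

lemma additive_image_add_span:
  fixes f :: "'a::ring_1 \<Rightarrow> 'b::ring_1"
  assumes add: "\<And>a b. f (a + b) = f a + f b" and G: "add_subgroup G" and T: "f ` T \<subseteq> G"
  shows "f ` add_span T \<subseteq> G"
proof -
  have f0: "f 0 = 0"
    using add[of 0 0] by simp
  have "f (- a) = - f a" for a
    using add[of a "- a"] f0 by (simp add: add_eq_0_iff)
  then have "add_subgroup {a. f a \<in> G}"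
    using G f0 unfolding add_subgroup_def by (auto simp: add)
  then have "add_span T \<subseteq> {a. f a \<in> G}"
    by (rule add_span_least) (use T in auto)
  then show ?thesis by auto
qed

lemma two_sided_ideal_Int:
  "two_sided_ideal J \<Longrightarrow> two_sided_ideal K \<Longrightarrow> two_sided_ideal (J \<inter> K)"
  unfolding two_sided_ideal_def add_subgroup_def by auto

lemma two_sided_ideal_left_ann: "two_sided_ideal J \<Longrightarrow> two_sided_ideal (left_ann J)"
  unfolding two_sided_ideal_def add_subgroup_def left_ann_def
  by (auto simp: distrib_right mult.assoc)

lemma semiprime_square_zero_ideal:
  fixes K :: "'a::ring_1 set"
  assumes "semiprime TYPE('a)" and K: "two_sided_ideal K" and sq: "\<And>a b. a \<in> K \<Longrightarrow> b \<in> K \<Longrightarrow> a * b = 0"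
  shows "K = {0}"
proof -
  have "0 \<in> K"
    using K unfolding two_sided_ideal_def add_subgroup_def by blast
  then have "{a * b | a b. a \<in> K \<and> b \<in> K} = {0}"
    using sq by force
  moreover have "add_span {0::'a} = {0}"
    using add_span_least[OF add_subgroup_singleton_zero] subset_add_span[of "{0::'a}"] by auto
  ultimately have "((set_prod K) ^^ (2 - 1)) K = {0}"
    unfolding set_prod_def by simp
  with assms(1) K show ?thesis
    unfolding semiprime_def by (metis one_le_numeral)
qed

lemma semiprime_ideal_Int_left_ann:
  fixes J :: "'a::ring_1 set"
  assumes "semiprime TYPE('a)" and "two_sided_ideal J"
  shows "J \<inter> left_ann J = {0}"
  using assms by (intro semiprime_square_zero_ideal two_sided_ideal_Int two_sided_ideal_left_ann)
    (auto simp: left_ann_def)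

lemma semiprime_ann_eq_left_ann:
  fixes J :: "'a::ring_1 set"
  assumes sp: "semiprime TYPE('a)" and J: "two_sided_ideal J"
  shows "ann J = left_ann J"
proof
  show "ann J \<subseteq> left_ann J"
    unfolding ann_def left_ann_def by auto
  show "left_ann J \<subseteq> ann J"
  proof
    fix k assume k: "k \<in> left_ann J"
    have "j * k \<in> J \<inter> left_ann J" if "j \<in> J" for j
      using J two_sided_ideal_left_ann[OF J] k that unfolding two_sided_ideal_def by blast
    then show "k \<in> ann J"
      using k semiprime_ideal_Int_left_ann[OF sp J] unfolding ann_def left_ann_def by auto
  qed
qed

section \<open>Automorphisms and left annihilators\<close>

lemma left_Goldie_acc_left_ann:
  fixes C :: "nat \<Rightarrow> 'a::ring_1 set"
  assumes "left_Goldie TYPE('a)" and "\<And>n. C n = left_ann (T n)" and "\<And>n. C n \<subseteq> C (Suc n)"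
  shows "\<exists>N. \<forall>m\<ge>N. C m = C N"
  using assms unfolding left_Goldie_def by metis

lemma ring_aut_eq_zero_iff:
  assumes "ring_aut \<sigma>"
  shows "\<sigma> a = 0 \<longleftrightarrow> a = 0"
proof -
  have "\<sigma> 0 = 0"
    using assms unfolding ring_aut_def by (metis add_cancel_right_right)
  then show ?thesis
    using assms unfolding ring_aut_def by (metis bij_pointE)
qed

lemma ring_aut_funpow:
  assumes "ring_aut \<sigma>"
  shows "ring_aut (\<sigma> ^^ n)"
proof (induction n)
  case 0
  show ?case by (simp add: ring_aut_def bij_def)
next
  case (Suc n)
  with assms show ?case
    by (simp add: ring_aut_def bij_comp del: funpow.simps) (simp add: funpow_Suc_right)
qed

lemma left_ann_antimono: "T \<subseteq> U \<Longrightarrow> left_ann U \<subseteq> left_ann T"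
  unfolding left_ann_def by auto

text \<open>The chain \<open>left_ann (\<sigma>\<^sup>n I)\<close> ascends; where it becomes stationary,
  injectivity of \<open>\<sigma>\<^sup>N\<close> shows that \<open>\<sigma>\<close> maps \<open>left_ann I\<close> into itself.\<close>

lemma left_Goldie_aut_image_left_ann:
  fixes \<sigma> :: "'a::ring_1 \<Rightarrow> 'a"
  assumes Goldie: "left_Goldie TYPE('a)" and aut: "ring_aut \<sigma>" and I: "\<sigma> ` I \<subseteq> I"
  shows "\<sigma> ` left_ann I = left_ann I"
proof
  have mult: "(\<sigma> ^^ n) (a * b) = (\<sigma> ^^ n) a * (\<sigma> ^^ n) b" for n a b
    using ring_aut_funpow[OF aut] unfolding ring_aut_def by blast
  have zero_iff: "(\<sigma> ^^ n) a = 0 \<longleftrightarrow> a = 0" for n a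
    using ring_aut_eq_zero_iff[OF ring_aut_funpow[OF aut]] .
  define C where "C n = left_ann ((\<sigma> ^^ n) ` I)" for n
  have "(\<sigma> ^^ Suc n) ` I \<subseteq> (\<sigma> ^^ n) ` I" for n
    by (metis I funpow_Suc_right image_comp image_mono)
  then have "C n \<subseteq> C (Suc n)" for n
    unfolding C_def by (rule left_ann_antimono)
  then have "\<exists>N. \<forall>m\<ge>N. C m = C N"
    by (rule left_Goldie_acc_left_ann[OF Goldie C_def])
  then obtain N where "\<forall>m\<ge>N. C m = C N" ..
  then have N: "C (Suc N) = C N"
    using le_SucI by blast
  show "\<sigma> ` left_ann I \<subseteq> left_ann I"
  proof clarify
    fix m assume m: "m \<in> left_ann I"
    have "(\<sigma> ^^ Suc N) m * (\<sigma> ^^ Suc N) i = 0" if "i \<in> I" for i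
      using m that zero_iff unfolding left_ann_def mult[symmetric] by blast
    then have "(\<sigma> ^^ Suc N) m \<in> C (Suc N)"
      unfolding C_def left_ann_def by blast
    then have "(\<sigma> ^^ Suc N) m \<in> C N"
      by (simp only: N)
    then have "(\<sigma> ^^ N) (\<sigma> m * i) = 0" if "i \<in> I" for i
      using that unfolding C_def left_ann_def mult by (simp add: funpow_Suc_right del: funpow.simps)
    then show "\<sigma> m \<in> left_ann I"
      using zero_iff unfolding left_ann_def by blast
  qed
  show "left_ann I \<subseteq> \<sigma> ` left_ann I"
  proof
    fix m assume m: "m \<in> left_ann I"
    obtain y where y: "m = \<sigma> y"
      using aut unfolding ring_aut_def by (metis bij_pointE)
    have "\<sigma> (y * i) = 0" if "i \<in> I" for i
      using aut m I that y unfolding ring_aut_def left_ann_def by auto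
    then have "y \<in> left_ann I"
      using ring_aut_eq_zero_iff[OF aut] unfolding left_ann_def by blast
    with y show "m \<in> \<sigma> ` left_ann I" by blast
  qed
qed

section \<open>The degree-lexicographic order on words\<close>

lemma deglex_iff_lenlex:
  assumes "u \<in> lists X" and "v \<in> lists X"
  shows "deglex lt u v \<longleftrightarrow> (u, v) \<in> lenlex {(a, b). a \<in> X \<and> b \<in> X \<and> lt a b}"
    (is "_ \<longleftrightarrow> _ \<in> lenlex ?R")
proof -
  have "(\<exists>k < length u. take k u = take k v \<and> lt (u ! k) (v ! k)) \<longleftrightarrow> (u, v) \<in> lex ?R"
    if len: "length u = length v"
  proof
    assume "\<exists>k < length u. take k u = take k v \<and> lt (u ! k) (v ! k)"
    then obtain k where k: "k < length u" "take k u = take k v" "lt (u ! k) (v ! k)"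
      by blast
    have "u = take k u @ u ! k # drop (Suc k) u" "v = take k u @ v ! k # drop (Suc k) v"
      using k len id_take_nth_drop by metis+
    moreover have "u ! k \<in> X" "v ! k \<in> X"
      using assms k len by (auto simp: in_lists_conv_set)
    ultimately show "(u, v) \<in> lex ?R"
      using k len unfolding lex_conv by blast
  next
    assume "(u, v) \<in> lex ?R"
    then show "\<exists>k < length u. take k u = take k v \<and> lt (u ! k) (v ! k)"
      by (elim lex_take_index) auto
  qed
  then show ?thesis
    unfolding deglex_def lenlex_conv by auto
qed

lemma deglex_if_shorter: "length u < length v \<Longrightarrow> deglex lt u v"
  unfolding deglex_def by simp

lemma length_le_if_deglex: "deglex lt u v \<Longrightarrow> length u \<le> length v"
  unfolding deglex_def by auto

lemma deglex_Cons: "deglex lt u v \<Longrightarrow> deglex lt (x # u) (x # v)"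
  unfolding deglex_def by (auto intro!: exI[where x = "Suc _"])

context
  fixes X :: "'x set" and lt :: "'x \<Rightarrow> 'x \<Rightarrow> bool"
  assumes order: "strict_lin_order X lt"
begin

lemma deglex_irrefl:
  assumes "u \<in> lists X"
  shows "\<not> deglex lt u u"
  using order lenlex_irreflexive[of "{(a, b). a \<in> X \<and> b \<in> X \<and> lt a b}" u]
  unfolding deglex_iff_lenlex[OF assms assms] strict_lin_order_def by blast

lemma deglex_trans:
  assumes u: "u \<in> lists X" and v: "v \<in> lists X" and w: "w \<in> lists X"
    and "deglex lt u v" "deglex lt v w"
  shows "deglex lt u w"
proof -
  have "trans {(a, b). a \<in> X \<and> b \<in> X \<and> lt a b}"
    using order unfolding strict_lin_order_def trans_def by blast
  with assms(4,5) show ?thesis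
    unfolding deglex_iff_lenlex[OF u v] deglex_iff_lenlex[OF v w] deglex_iff_lenlex[OF u w]
    by (blast intro: lenlex_trans)
qed

lemma deglex_total:
  assumes u: "u \<in> lists X" and v: "v \<in> lists X" and "u \<noteq> v"
  shows "deglex lt u v \<or> deglex lt v u"
proof (cases "length u = length v")
  case True
  then obtain pre x u' y v' where "x \<noteq> y" "u = pre @ [x] @ u'" "v = pre @ [y] @ v'"
    using same_length_different[OF \<open>u \<noteq> v\<close>] by blast
  moreover from this have "lt x y \<or> lt y x"
    using order u v unfolding strict_lin_order_def by auto
  ultimately show ?thesis
    using True u v unfolding deglex_iff_lenlex[OF u v] deglex_iff_lenlex[OF v u] lenlex_conv lex_conv
    by fastforce
qed (auto simp: deglex_def)

lemma deglex_max_exists: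
  assumes "finite F" "F \<noteq> {}" "F \<subseteq> lists X"
  shows "\<exists>w\<in>F. \<forall>v\<in>F. v \<noteq> w \<longrightarrow> deglex lt v w"
  using assms
proof (induction F rule: finite_ne_induct)
  case (insert x F)
  then obtain w where w: "w \<in> F" "\<forall>v\<in>F. v \<noteq> w \<longrightarrow> deglex lt v w"
    by auto
  show ?case
  proof (cases "deglex lt x w")
    case True
    with w show ?thesis by auto
  next
    case False
    then have "deglex lt w x"
      using deglex_total[of w x] w insert by auto
    moreover have "v \<in> lists X" if "v \<in> F" for v
      using that insert.prems by blast
    ultimately have "deglex lt v x" if "v \<in> F" for v
      using that w insert.prems deglex_trans[of v w x] by (cases "v = w") auto
    then show ?thesis by auto
  qed
qed simp

end

section \<open>Coefficients in a free skew extension\<close>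

locale free_skew_extension =
  fixes \<iota> :: "'r::ring_1 \<Rightarrow> 's::ring_1" and \<xi> :: "'x \<Rightarrow> 's" and X :: "'x set"
    and \<sigma> \<delta> :: "'x \<Rightarrow> 'r \<Rightarrow> 'r"
  assumes aut: "\<forall>x\<in>X. ring_aut (\<sigma> x)"
    and derivation: "\<forall>x\<in>X. sigma_derivation (\<sigma> x) (\<delta> x)"
    and skew: "free_skew_ext \<iota> \<xi> X \<sigma> \<delta>"
begin

abbreviation coeff :: "'s \<Rightarrow> 'x list \<Rightarrow> 'r" where
  "coeff \<equiv> coeffs \<iota> \<xi> X"

lemma iota_add: "\<iota> (a + b) = \<iota> a + \<iota> b"
  and iota_mult: "\<iota> (a * b) = \<iota> a * \<iota> b"
  using skew by (simp_all add: free_skew_ext_def ring_hom_class_def)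

lemma iota_zero [simp]: "\<iota> 0 = 0"
  using iota_add[of 0 0] by simp

lemma xi_mult_iota: "x \<in> X \<Longrightarrow> \<xi> x * \<iota> r = \<iota> (\<sigma> x r) * \<xi> x + \<iota> (\<delta> x r)"
  using skew by (simp add: free_skew_ext_def)

lemma sigma_zero [simp]: "x \<in> X \<Longrightarrow> \<sigma> x 0 = 0"
  using aut ring_aut_eq_zero_iff by blast

lemma delta_zero [simp]: "x \<in> X \<Longrightarrow> \<delta> x 0 = 0"
  using derivation unfolding sigma_derivation_def by (metis add_cancel_right_right)

definition lincomb :: "('x list \<Rightarrow> 'r) \<Rightarrow> 's" where
  "lincomb c = (\<Sum>w | c w \<noteq> 0. \<iota> (c w) * mon \<xi> w)"

lemma lincomb_eq_sum:
  "finite F \<Longrightarrow> {w. c w \<noteq> 0} \<subseteq> F \<Longrightarrow> lincomb c = (\<Sum>w\<in>F. \<iota> (c w) * mon \<xi> w)"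
  unfolding lincomb_def by (rule sum.mono_neutral_left) auto

lemma represents_iff_lincomb:
  "represents \<iota> \<xi> X c s \<longleftrightarrow> finite {w. c w \<noteq> 0} \<and> {w. c w \<noteq> 0} \<subseteq> lists X \<and> s = lincomb c"
  unfolding represents_def lincomb_def by simp

lemma ex1_represents: "\<exists>!c. represents \<iota> \<xi> X c s"
  using skew by (simp add: free_skew_ext_def)

lemma represents_coeff: "represents \<iota> \<xi> X (coeff s) s"
  unfolding coeffs_def by (rule theI'[OF ex1_represents])

lemma finite_coeff_support: "finite {w. coeff s w \<noteq> 0}"
  and lincomb_coeff: "lincomb (coeff s) = s"
  using represents_coeff[of s] unfolding represents_iff_lincomb by simp_all

lemma coeff_support_lists: "coeff s w \<noteq> 0 \<Longrightarrow> w \<in> lists X"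
  using represents_coeff[of s] unfolding represents_iff_lincomb by blast

lemma coeff_lincomb:
  assumes "finite {w. c w \<noteq> 0}" and "{w. c w \<noteq> 0} \<subseteq> lists X"
  shows "coeff (lincomb c) = c"
  unfolding coeffs_def
  by (rule the1_equality[OF ex1_represents]) (use assms in \<open>simp add: represents_iff_lincomb\<close>)

lemma coeff_eqI:
  assumes "finite F" and "F \<subseteq> lists X" and "{w. c w \<noteq> 0} \<subseteq> F"
    and "s = (\<Sum>w\<in>F. \<iota> (c w) * mon \<xi> w)"
  shows "coeff s = c"
  using assms coeff_lincomb[of c] lincomb_eq_sum[of F c] finite_subset[of _ F] by auto

lemma coeff_zero [simp]: "coeff 0 w = 0"
  using coeff_eqI[of "{}" "\<lambda>_. 0" 0] by simp

lemma eq_zero_iff_coeff: "s = 0 \<longleftrightarrow> (\<forall>w. coeff s w = 0)"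
  using lincomb_coeff[of s] by (auto simp: lincomb_def)

lemma coeff_add: "coeff (s + t) w = coeff s w + coeff t w"
proof -
  let ?F = "{w. coeff s w \<noteq> 0} \<union> {w. coeff t w \<noteq> 0}"
  have F: "finite ?F" "?F \<subseteq> lists X"
    using finite_coeff_support coeff_support_lists by auto
  have "s + t = (\<Sum>w\<in>?F. \<iota> (coeff s w) * mon \<xi> w) + (\<Sum>w\<in>?F. \<iota> (coeff t w) * mon \<xi> w)"
    using F lincomb_eq_sum[of ?F "coeff s"] lincomb_eq_sum[of ?F "coeff t"] lincomb_coeff by auto
  then have "coeff (s + t) = (\<lambda>w. coeff s w + coeff t w)"
    using F by (intro coeff_eqI[of ?F]) (auto simp: iota_add distrib_right sum.distrib)
  then show ?thesis by simp
qed

lemma coeff_diff: "coeff (s - t) w = coeff s w - coeff t w"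
  using coeff_add[of "s - t" t w] by (simp add: eq_diff_eq)

lemma coeff_sum: "coeff (\<Sum>i\<in>I. f i) w = (\<Sum>i\<in>I. coeff (f i) w)"
  by (induction I rule: infinite_finite_induct) (simp_all add: coeff_add)

lemma coeff_iota_mult: "coeff (\<iota> r * s) w = r * coeff s w"
proof -
  let ?F = "{w. coeff s w \<noteq> 0}"
  have "\<iota> r * s = \<iota> r * (\<Sum>w\<in>?F. \<iota> (coeff s w) * mon \<xi> w)"
    using lincomb_coeff[of s] by (simp add: lincomb_def)
  also have "\<dots> = (\<Sum>w\<in>?F. \<iota> (r * coeff s w) * mon \<xi> w)"
    by (simp add: sum_distrib_left iota_mult mult.assoc)
  finally have "coeff (\<iota> r * s) = (\<lambda>w. r * coeff s w)"
    using finite_coeff_support coeff_support_lists by (intro coeff_eqI) auto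
  then show ?thesis by simp
qed

lemma coeff_monomial:
  assumes "w \<in> lists X"
  shows "coeff (\<iota> r * mon \<xi> w) v = (if v = w then r else 0)"
proof -
  have "coeff (\<iota> r * mon \<xi> w) = (\<lambda>v. if v = w then r else 0)"
    by (rule coeff_eqI[of "{w}"]) (use assms in auto)
  then show ?thesis by simp
qed

lemma coeff_xi_mult:
  assumes x: "x \<in> X"
  shows "coeff (\<xi> x * s) w =
    (if w \<noteq> [] \<and> hd w = x then \<sigma> x (coeff s (tl w)) else 0) + \<delta> x (coeff s w)"
proof -
  let ?c = "coeff s" and ?F = "{w. coeff s w \<noteq> 0}"
  have F: "finite ?F" "?F \<subseteq> lists X"
    using finite_coeff_support coeff_support_lists by auto
  have "\<xi> x * s = \<xi> x * (\<Sum>v\<in>?F. \<iota> (?c v) * mon \<xi> v)"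
    using lincomb_coeff[of s] by (simp add: lincomb_def)
  also have "\<dots> = (\<Sum>v\<in>?F. (\<xi> x * \<iota> (?c v)) * mon \<xi> v)"
    by (simp add: sum_distrib_left mult.assoc)
  also have "\<dots> = (\<Sum>v\<in>?F. \<iota> (\<sigma> x (?c v)) * mon \<xi> (x # v) + \<iota> (\<delta> x (?c v)) * mon \<xi> v)"
    using x by (simp add: xi_mult_iota distrib_right mult.assoc mon_def)
  finally have "coeff (\<xi> x * s) w = (\<Sum>v\<in>?F. coeff (\<iota> (\<sigma> x (?c v)) * mon \<xi> (x # v)) w)
      + (\<Sum>v\<in>?F. coeff (\<iota> (\<delta> x (?c v)) * mon \<xi> v) w)"
    by (simp add: coeff_sum coeff_add sum.distrib)
  also have "\<dots> = (\<Sum>v\<in>?F. if w = x # v then \<sigma> x (?c v) else 0)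
      + (\<Sum>v\<in>?F. if w = v then \<delta> x (?c v) else 0)"
    using x by (intro arg_cong2[where f = "(+)"] sum.cong) (auto simp: coeff_monomial coeff_support_lists)
  also have "(\<Sum>v\<in>?F. if w = v then \<delta> x (?c v) else 0) = \<delta> x (?c w)"
    using F x by (cases "?c w = 0") auto
  also have "(\<Sum>v\<in>?F. if w = x # v then \<sigma> x (?c v) else 0) =
      (if w \<noteq> [] \<and> hd w = x then \<sigma> x (?c (tl w)) else 0)"
  proof (cases "w \<noteq> [] \<and> hd w = x")
    case True
    then have "w = x # v \<longleftrightarrow> tl w = v" for v
      by (cases w) auto
    with True F x show ?thesis by auto
  next
    case False
    then have "w \<noteq> x # v" for v
      by auto
    with False show ?thesis by auto
  qed
  finally show ?thesis .
qed

lemma coeff_xi_mult_nonzero: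
  "x \<in> X \<Longrightarrow> coeff (\<xi> x * s) w \<noteq> 0 \<Longrightarrow> (\<exists>u. w = x # u \<and> coeff s u \<noteq> 0) \<or> coeff s w \<noteq> 0"
  by (cases w) (auto simp: coeff_xi_mult split: if_splits)

definition deg_less :: "nat \<Rightarrow> 's \<Rightarrow> bool" where
  "deg_less n s \<longleftrightarrow> (\<forall>w. coeff s w \<noteq> 0 \<longrightarrow> length w < n)"

lemma deg_less_add: "deg_less n s \<Longrightarrow> deg_less n t \<Longrightarrow> deg_less n (s + t)"
  unfolding deg_less_def coeff_add by (metis add.right_neutral add_0)

lemma deg_less_iota_mult: "deg_less n s \<Longrightarrow> deg_less n (\<iota> r * s)"
  unfolding deg_less_def coeff_iota_mult by (metis mult_zero_right)

lemma deg_less_sum: "(\<And>i. i \<in> I \<Longrightarrow> deg_less n (f i)) \<Longrightarrow> deg_less n (\<Sum>i\<in>I. f i)"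
  unfolding deg_less_def coeff_sum by (metis (mono_tags, lifting) sum.neutral)

lemma deg_less_monomial: "w \<in> lists X \<Longrightarrow> length w < n \<Longrightarrow> deg_less n (\<iota> r * mon \<xi> w)"
  unfolding deg_less_def by (simp add: coeff_monomial)

lemma deg_less_xi_mult: "x \<in> X \<Longrightarrow> deg_less n s \<Longrightarrow> deg_less (Suc n) (\<xi> x * s)"
  unfolding deg_less_def by (fastforce dest: coeff_xi_mult_nonzero)

lemma mon_Cons: "mon \<xi> (x # w) = \<xi> x * mon \<xi> w"
  by (simp add: mon_def)

lemma foldr_sigma_surj: "w \<in> lists X \<Longrightarrow> \<exists>r'. foldr \<sigma> w r' = r"
proof (induction w arbitrary: r)
  case (Cons x w)
  then obtain r'' where "\<sigma> x r'' = r"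
    using aut unfolding ring_aut_def by (metis Cons_in_lists_iff bij_pointE)
  with Cons show ?case
    by (metis Cons_in_lists_iff foldr_Cons o_apply)
qed simp

text \<open>Moving a scalar across a monomial twists it by \<open>\<sigma>\<^sub>w = \<sigma>\<^sub>w\<^sub>1 \<circ> \<dots> \<circ> \<sigma>\<^sub>w\<^sub>n\<close>,
  up to terms of lower length.\<close>

lemma mon_mult_iota:
  "w \<in> lists X \<Longrightarrow> deg_less (length w) (mon \<xi> w * \<iota> r - \<iota> (foldr \<sigma> w r) * mon \<xi> w)"
proof (induction w)
  case Nil
  then show ?case by (simp add: mon_def deg_less_def)
next
  case (Cons x w)
  let ?s = "foldr \<sigma> w r"
  have x: "x \<in> X" and w: "w \<in> lists X"
    using Cons.prems by auto
  have "\<xi> x * (\<iota> ?s * mon \<xi> w) = \<iota> (\<sigma> x ?s) * mon \<xi> (x # w) + \<iota> (\<delta> x ?s) * mon \<xi> w"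
    using x by (simp add: mult.assoc[symmetric] xi_mult_iota distrib_right) (simp add: mon_Cons mult.assoc)
  then have "mon \<xi> (x # w) * \<iota> r - \<iota> (foldr \<sigma> (x # w) r) * mon \<xi> (x # w)
      = \<xi> x * (mon \<xi> w * \<iota> r - \<iota> ?s * mon \<xi> w) + \<iota> (\<delta> x ?s) * mon \<xi> w"
    by (simp add: right_diff_distrib mon_Cons mult.assoc)
  then show ?case
    using Cons.IH[OF w] x w
    by (simp add: deg_less_add deg_less_xi_mult deg_less_monomial)
qed

lemma coeff_mult_iota:
  assumes "deg_less (Suc n) s"
  obtains d where "deg_less n d" and "\<And>w. coeff (s * \<iota> r) w = coeff s w * foldr \<sigma> w r + coeff d w"
proof
  let ?F = "{w. coeff s w \<noteq> 0}"
  let ?e = "\<lambda>w. coeff s w * foldr \<sigma> w r"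
  let ?d = "s * \<iota> r - lincomb ?e"
  have F: "finite ?F" "?F \<subseteq> lists X" "{w. ?e w \<noteq> 0} \<subseteq> ?F"
    using finite_coeff_support coeff_support_lists by auto
  have "s * \<iota> r = (\<Sum>v\<in>?F. \<iota> (coeff s v) * mon \<xi> v) * \<iota> r"
    using lincomb_coeff[of s] by (simp add: lincomb_def)
  moreover have "lincomb ?e = (\<Sum>v\<in>?F. \<iota> (coeff s v) * (\<iota> (foldr \<sigma> v r) * mon \<xi> v))"
    using F by (simp add: lincomb_eq_sum iota_mult mult.assoc)
  ultimately have d: "?d = (\<Sum>v\<in>?F. \<iota> (coeff s v) * (mon \<xi> v * \<iota> r - \<iota> (foldr \<sigma> v r) * mon \<xi> v))"
    by (simp add: sum_distrib_right sum_subtractf right_diff_distrib mult.assoc)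
  have "deg_less n (mon \<xi> v * \<iota> r - \<iota> (foldr \<sigma> v r) * mon \<xi> v)" if "v \<in> ?F" for v
    using assms that F mon_mult_iota[of v r] unfolding deg_less_def by fastforce
  then show "deg_less n ?d"
    unfolding d by (intro deg_less_sum deg_less_iota_mult)
  have "coeff (lincomb ?e) = ?e"
    using F by (intro coeff_lincomb) (auto dest: finite_subset)
  then show "coeff (s * \<iota> r) w = ?e w + coeff ?d w" for w
    by (simp add: coeff_diff)
qed

end

locale ordered_free_skew_extension = free_skew_extension \<iota> \<xi> X \<sigma> \<delta>
  for \<iota> :: "'r::ring_1 \<Rightarrow> 's::ring_1" and \<xi> :: "'x \<Rightarrow> 's" and X \<sigma> \<delta> +
  fixes lt :: "'x \<Rightarrow> 'x \<Rightarrow> bool"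
  assumes order: "strict_lin_order X lt"
begin

abbreviation lterm :: "'s \<Rightarrow> 'x list" where
  "lterm \<equiv> lead_term \<iota> \<xi> X lt"

abbreviation lcoeff :: "'s \<Rightarrow> 'r" where
  "lcoeff \<equiv> lead_coeff_S \<iota> \<xi> X lt"

definition support_below :: "'s \<Rightarrow> 'x list \<Rightarrow> bool" where
  "support_below s w \<longleftrightarrow> (\<forall>v. coeff s v \<noteq> 0 \<longrightarrow> v \<noteq> w \<longrightarrow> deglex lt v w)"

lemma lead_term_eqI:
  assumes w: "coeff s w \<noteq> 0" and below: "support_below s w"
  shows "lterm s = w"
  unfolding lead_term_def
proof (rule the_equality)
  show "coeff s w \<noteq> 0 \<and> (\<forall>v. coeff s v \<noteq> 0 \<and> v \<noteq> w \<longrightarrow> deglex lt v w)"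
    using assms unfolding support_below_def by blast
next
  fix u assume u: "coeff s u \<noteq> 0 \<and> (\<forall>v. coeff s v \<noteq> 0 \<and> v \<noteq> u \<longrightarrow> deglex lt v u)"
  show "u = w"
  proof (rule ccontr)
    assume "u \<noteq> w"
    then have "deglex lt u w" "deglex lt w u"
      using u below w unfolding support_below_def by auto
    moreover have "u \<in> lists X" "w \<in> lists X"
      using u w coeff_support_lists by auto
    ultimately show False
      using deglex_trans[OF order] deglex_irrefl[OF order] by metis
  qed
qed

lemma lead_coeff_eqI: "coeff s w \<noteq> 0 \<Longrightarrow> support_below s w \<Longrightarrow> lcoeff s = coeff s w"
  by (simp add: lead_coeff_S_def lead_term_eqI)

lemma lead_term_support_below:
  assumes "s \<noteq> 0"
  shows "coeff s (lterm s) \<noteq> 0" and "support_below s (lterm s)"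
proof -
  have "{w. coeff s w \<noteq> 0} \<noteq> {}"
    using assms eq_zero_iff_coeff by auto
  moreover have "{w. coeff s w \<noteq> 0} \<subseteq> lists X"
    using coeff_support_lists by blast
  ultimately obtain w where "coeff s w \<noteq> 0" "\<forall>v. coeff s v \<noteq> 0 \<longrightarrow> v \<noteq> w \<longrightarrow> deglex lt v w"
    using deglex_max_exists[OF order finite_coeff_support[of s]] by auto
  then have "coeff s w \<noteq> 0" "support_below s w"
    unfolding support_below_def by auto
  then show "coeff s (lterm s) \<noteq> 0" and "support_below s (lterm s)"
    using lead_term_eqI by simp_all
qed

lemma length_le_lead_term: "s \<noteq> 0 \<Longrightarrow> coeff s v \<noteq> 0 \<Longrightarrow> length v \<le> length (lterm s)"
  using lead_term_support_below length_le_if_deglex unfolding support_below_def by fastforce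

end

section \<open>The ideal of leading coefficients\<close>

locale lead_coeff_ideal = ordered_free_skew_extension \<iota> \<xi> X \<sigma> \<delta> lt
  for \<iota> :: "'r::ring_1 \<Rightarrow> 's::ring_1" and \<xi> X \<sigma> \<delta> lt +
  fixes A :: "'s set"
  assumes ideal: "two_sided_ideal A"
begin

definition lead_ideal :: "'r set" where
  "lead_ideal = add_span {lcoeff a | a. a \<in> A \<and> a \<noteq> 0}"

lemma lead_coeff_in_lead_ideal: "a \<in> A \<Longrightarrow> a \<noteq> 0 \<Longrightarrow> lcoeff a \<in> lead_ideal"
  unfolding lead_ideal_def by (rule subsetD[OF subset_add_span]) blast

lemma coeff_in_lead_ideal:
  assumes "a \<in> A" and "support_below a w"
  shows "coeff a w \<in> lead_ideal"
proof (cases "coeff a w = 0")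
  case True
  then show ?thesis
    unfolding lead_ideal_def by (simp add: zero_in_add_span)
next
  case False
  then have "a \<noteq> 0"
    by auto
  moreover have "lcoeff a = coeff a w"
    using False assms(2) by (rule lead_coeff_eqI)
  ultimately show ?thesis
    using lead_coeff_in_lead_ideal[OF assms(1)] by simp
qed

lemma mult_lead_coeff_in_lead_ideal:
  assumes a: "a \<in> A" "a \<noteq> 0"
  shows "r * lcoeff a \<in> lead_ideal"
proof -
  have "\<iota> r * a \<in> A"
    using ideal a unfolding two_sided_ideal_def by blast
  moreover have "support_below (\<iota> r * a) (lterm a)"
    using lead_term_support_below(2)[OF a(2)] unfolding support_below_def coeff_iota_mult by force
  ultimately have "coeff (\<iota> r * a) (lterm a) \<in> lead_ideal"
    by (rule coeff_in_lead_ideal)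
  then show ?thesis
    by (simp add: coeff_iota_mult lead_coeff_S_def)
qed

lemma lead_coeff_mult_in_lead_ideal:
  assumes a: "a \<in> A" "a \<noteq> 0"
  shows "lcoeff a * r \<in> lead_ideal"
proof -
  let ?w = "lterm a"
  have "?w \<in> lists X"
    using lead_term_support_below(1)[OF a(2)] by (rule coeff_support_lists)
  then obtain r' where r': "foldr \<sigma> ?w r' = r"
    using foldr_sigma_surj by blast
  have "deg_less (Suc (length ?w)) a"
    using length_le_lead_term[OF a(2)] unfolding deg_less_def by (simp add: less_Suc_eq_le)
  then obtain d where d: "deg_less (length ?w) d"
    and coeff: "\<And>u. coeff (a * \<iota> r') u = coeff a u * foldr \<sigma> u r' + coeff d u"
    by (rule coeff_mult_iota[where r = r']) blast
  have "a * \<iota> r' \<in> A"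
    using ideal a unfolding two_sided_ideal_def by blast
  moreover have "support_below (a * \<iota> r') ?w"
    unfolding support_below_def
  proof clarify
    fix v assume "coeff (a * \<iota> r') v \<noteq> 0" "v \<noteq> ?w"
    then consider "coeff a v \<noteq> 0" "v \<noteq> ?w" | "coeff d v \<noteq> 0"
      unfolding coeff by force
    then show "deglex lt v ?w"
      using lead_term_support_below(2)[OF a(2)] d
      unfolding support_below_def deg_less_def by cases (auto intro: deglex_if_shorter)
  qed
  ultimately have "coeff (a * \<iota> r') ?w \<in> lead_ideal"
    by (rule coeff_in_lead_ideal)
  moreover have "coeff d ?w = 0"
    using d unfolding deg_less_def by blast
  ultimately show ?thesis
    by (simp add: coeff r' lead_coeff_S_def)
qed

lemma sigma_lead_coeff_in_lead_ideal:
  assumes x: "x \<in> X" and a: "a \<in> A" "a \<noteq> 0"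
  shows "\<sigma> x (lcoeff a) \<in> lead_ideal"
proof -
  let ?w = "lterm a"
  have short: "coeff a v \<noteq> 0 \<Longrightarrow> length v < length (x # ?w)" for v
    using length_le_lead_term[OF a(2)] by fastforce
  have "\<xi> x * a \<in> A"
    using ideal a unfolding two_sided_ideal_def by blast
  moreover have "support_below (\<xi> x * a) (x # ?w)"
    unfolding support_below_def
  proof clarify
    fix v assume "coeff (\<xi> x * a) v \<noteq> 0" "v \<noteq> x # ?w"
    then consider u where "v = x # u" "coeff a u \<noteq> 0" "u \<noteq> ?w" | "coeff a v \<noteq> 0"
      using coeff_xi_mult_nonzero[OF x] by blast
    then show "deglex lt v (x # ?w)"
    proof cases
      case 1
      then show ?thesis
        using lead_term_support_below(2)[OF a(2)] unfolding support_below_def by (simp add: deglex_Cons)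
    next
      case 2
      then show ?thesis
        by (intro deglex_if_shorter short)
    qed
  qed
  ultimately have "coeff (\<xi> x * a) (x # ?w) \<in> lead_ideal"
    by (rule coeff_in_lead_ideal)
  moreover have "coeff a (x # ?w) = 0"
    using short[of "x # ?w"] by auto
  ultimately show ?thesis
    using x by (simp add: coeff_xi_mult lead_coeff_S_def)
qed

lemma add_subgroup_lead_ideal: "add_subgroup lead_ideal"
  unfolding lead_ideal_def by (rule add_subgroup_add_span)

lemma additive_image_lead_ideal:
  assumes add: "\<And>a b. f (a + b) = f a + f b"
    and lead: "\<And>a. a \<in> A \<Longrightarrow> a \<noteq> 0 \<Longrightarrow> f (lcoeff a) \<in> lead_ideal"
  shows "f ` lead_ideal \<subseteq> lead_ideal"
proof -
  have "f ` add_span {lcoeff a | a. a \<in> A \<and> a \<noteq> 0} \<subseteq> lead_ideal"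
    by (rule additive_image_add_span[OF add add_subgroup_lead_ideal]) (use lead in blast)
  then show ?thesis
    unfolding lead_ideal_def .
qed

lemma two_sided_ideal_lead_ideal: "two_sided_ideal lead_ideal"
proof -
  have "r * i \<in> lead_ideal" "i * r \<in> lead_ideal" if "i \<in> lead_ideal" for r i
    using that additive_image_lead_ideal[of "\<lambda>i. r * i"] additive_image_lead_ideal[of "\<lambda>i. i * r"]
      mult_lead_coeff_in_lead_ideal lead_coeff_mult_in_lead_ideal
    by (auto simp: distrib_left distrib_right)
  with add_subgroup_lead_ideal show ?thesis
    unfolding two_sided_ideal_def by blast
qed

lemma sigma_image_lead_ideal: "x \<in> X \<Longrightarrow> \<sigma> x ` lead_ideal \<subseteq> lead_ideal"
  using aut by (intro additive_image_lead_ideal) (auto simp: ring_aut_def sigma_lead_coeff_in_lead_ideal)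

context
  assumes semiprime: "semiprime TYPE('r)"
begin

lemma ann_lead_ideal_eq_left_ann: "ann lead_ideal = left_ann lead_ideal"
  using semiprime two_sided_ideal_lead_ideal by (rule semiprime_ann_eq_left_ann)

lemma ann_lead_ideal_mult_eq_zero:
  assumes m: "m \<in> ann lead_ideal" and a: "a \<in> A"
  shows "\<iota> m * a = 0"
proof (rule ccontr)
  let ?b = "\<iota> m * a"
  assume b: "?b \<noteq> 0"
  have "?b \<in> A"
    using ideal a unfolding two_sided_ideal_def by blast
  then have "lcoeff ?b \<in> lead_ideal"
    using b by (rule lead_coeff_in_lead_ideal)
  moreover have "lcoeff ?b \<in> left_ann lead_ideal"
    using m two_sided_ideal_left_ann[OF two_sided_ideal_lead_ideal]
    unfolding ann_lead_ideal_eq_left_ann two_sided_ideal_def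
    by (simp add: lead_coeff_S_def coeff_iota_mult)
  ultimately have "lcoeff ?b = 0"
    using semiprime_ideal_Int_left_ann[OF semiprime two_sided_ideal_lead_ideal] by blast
  with lead_term_support_below(1)[OF b] show False
    by (simp add: lead_coeff_S_def)
qed

context
  assumes Goldie: "left_Goldie TYPE('r)"
begin

lemma sigma_image_ann_lead_ideal: "x \<in> X \<Longrightarrow> \<sigma> x ` ann lead_ideal = ann lead_ideal"
  unfolding ann_lead_ideal_eq_left_ann
  using aut sigma_image_lead_ideal by (intro left_Goldie_aut_image_left_ann[OF Goldie]) auto

lemma delta_image_ann_lead_ideal:
  assumes x: "x \<in> X"
  shows "\<delta> x ` ann lead_ideal \<subseteq> ann lead_ideal"
proof clarify
  fix m assume m: "m \<in> ann lead_ideal"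
  have "\<iota> (\<delta> x m) * a = 0" if "a \<in> A" for a
  proof -
    have "\<xi> x * a \<in> A"
      using ideal that unfolding two_sided_ideal_def by blast
    moreover have "\<sigma> x m \<in> ann lead_ideal"
      using sigma_image_ann_lead_ideal[OF x] m by blast
    ultimately have "\<iota> (\<sigma> x m) * (\<xi> x * a) = 0"
      by (rule ann_lead_ideal_mult_eq_zero[rotated])
    moreover have "\<xi> x * (\<iota> m * a) = \<iota> (\<sigma> x m) * (\<xi> x * a) + \<iota> (\<delta> x m) * a"
      using x by (simp add: mult.assoc[symmetric] xi_mult_iota distrib_right)
    ultimately show ?thesis
      using ann_lead_ideal_mult_eq_zero[OF m that] by simp
  qed
  then have "\<delta> x m * lcoeff a = 0" if "a \<in> A" for a
    using that coeff_iota_mult[of "\<delta> x m" a] unfolding lead_coeff_S_def by simp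
  then have "(\<lambda>i. \<delta> x m * i) ` lead_ideal \<subseteq> {0}"
    unfolding lead_ideal_def
    by (intro additive_image_add_span add_subgroup_singleton_zero) (auto simp: distrib_left)
  then show "\<delta> x m \<in> ann lead_ideal"
    unfolding ann_lead_ideal_eq_left_ann left_ann_def by blast
qed

end

end

end

theorem proposition2:
  fixes \<iota> :: "'r::ring_1 \<Rightarrow> 's::ring_1"
    and \<xi> :: "'x \<Rightarrow> 's"
    and X :: "'x set"
    and \<sigma> \<delta> :: "'x \<Rightarrow> 'r \<Rightarrow> 'r"
    and lt :: "'x \<Rightarrow> 'x \<Rightarrow> bool"
    and A :: "'s set"
  assumes "semiprime TYPE('r)"
    and "left_Goldie TYPE('r)"
    and "X \<noteq> {}"
    and "\<forall>x\<in>X. ring_aut (\<sigma> x)"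
    and "\<forall>x\<in>X. sigma_derivation (\<sigma> x) (\<delta> x)"
    and "free_skew_ext \<iota> \<xi> X \<sigma> \<delta>"
    and "strict_lin_order X lt"
    and "two_sided_ideal A" and "A \<noteq> {0}"
  defines "I \<equiv> add_span {lead_coeff_S \<iota> \<xi> X lt a | a. a \<in> A \<and> a \<noteq> 0}"
  shows "two_sided_ideal I \<and>
    (\<forall>x\<in>X. \<sigma> x ` I \<subseteq> I) \<and>
    (\<forall>x\<in>X. \<sigma> x ` ann I = ann I \<and> \<delta> x ` ann I \<subseteq> ann I)"
proof -
  interpret lead_coeff_ideal \<iota> \<xi> X \<sigma> \<delta> lt A
    using assms(4-8) by unfold_locales
  have "I = lead_ideal"
    unfolding I_def lead_ideal_def ..
  then show ?thesis
    using two_sided_ideal_lead_ideal sigma_image_lead_ideal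
      sigma_image_ann_lead_ideal[OF assms(1,2)] delta_image_ann_lead_ideal[OF assms(1,2)]
    by simp
qed

end
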